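(* Let $\mathcal{A}$ be a finite abelian group and $\mu$ a stationary Markov measure on $\mathcal{A}^{\mathbb{Z}}$ whose transition matrix has all entries nonzero. If $\nu$ is a probability measure on $\mathcal{A}^{\mathbb{Z}}$ absolutely continuous with respect to $\mu$ (not necessarily shift-invariant), then $\nu$ is harmonically mixing.
   Context: Characters of $\mathcal{A}^{\mathbb{Z}}$ are $\chi=\bigotimes_{n\in\mathbb{Z}}\chi_n$ with $\chi_n$ characters of $\mathcal{A}$, all but finitely many trivial; rank$(\chi)$ is the number of nontrivial $\chi_n$. A measure $\mu$ is harmonically mixing if for every $\varepsilon>0$ there is $R$ such that rank$(\chi)>R$ implies $|\int\chi\,d\mu|<\varepsilon$. *)

theory Defs
  imports "HOL-Probability.Probability"
begin

definition shift_space :: "(int \<Rightarrow> 'a) measure" where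
  "shift_space = PiM UNIV (\<lambda>_::int. count_space (UNIV :: 'a set))"

definition character :: "('a::ab_group_add \<Rightarrow> complex) \<Rightarrow> bool" where
  "character ch \<longleftrightarrow> (\<forall>x y. ch (x + y) = ch x * ch y) \<and> (\<forall>x. cmod (ch x) = 1)"

text \<open>A character of A^Z is given by a family c of characters of A,
  c n being the n-th tensor factor; its support is the set of nontrivial factors.\<close>
definition char_support :: "(int \<Rightarrow> 'a \<Rightarrow> complex) \<Rightarrow> int set" where
  "char_support c = {n. c n \<noteq> (\<lambda>_. 1)}"

definition char_rank :: "(int \<Rightarrow> 'a \<Rightarrow> complex) \<Rightarrow> nat" where
  "char_rank c = card (char_support c)"

definition seq_char :: "(int \<Rightarrow> 'a \<Rightarrow> complex) \<Rightarrow> (int \<Rightarrow> 'a) \<Rightarrow> complex" where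
  "seq_char c x = (\<Prod>n\<in>char_support c. c n (x n))"

definition harmonically_mixing :: "(int \<Rightarrow> 'a::ab_group_add) measure \<Rightarrow> bool" where
  "harmonically_mixing \<nu> \<longleftrightarrow>
     (\<forall>\<epsilon>>0. \<exists>R::nat. \<forall>c. (\<forall>n. character (c n)) \<and> finite (char_support c) \<and> char_rank c > R
        \<longrightarrow> cmod (\<integral>x. seq_char c x \<partial>\<nu>) < \<epsilon>)"

definition stationary_markov ::
  "(int \<Rightarrow> 'a::finite) measure \<Rightarrow> ('a \<Rightarrow> real) \<Rightarrow> ('a \<Rightarrow> 'a \<Rightarrow> real) \<Rightarrow> bool" where
  "stationary_markov \<mu> p P \<longleftrightarrow>
     sets \<mu> = sets shift_space \<and> prob_space \<mu> \<and>
     (\<forall>a. p a \<ge> 0) \<and> (\<Sum>a\<in>UNIV. p a) = 1 \<and>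
     (\<forall>a b. P a b \<ge> 0) \<and> (\<forall>a. (\<Sum>b\<in>UNIV. P a b) = 1) \<and>
     (\<forall>b. (\<Sum>a\<in>UNIV. p a * P a b) = p b) \<and>
     (\<forall>(n::int) (m::nat) (w::nat \<Rightarrow> 'a).
        measure \<mu> {x \<in> space \<mu>. \<forall>i\<le>m. x (n + int i) = w i}
          = p (w 0) * (\<Prod>i<m. P (w i) (w (Suc i))))"

end

theory Submission
  imports Defs
begin

text \<open>
  Let \<open>D\<close> be the density of \<open>\<nu>\<close> with respect to \<open>\<mu>\<close>. Then \<open>\<integral>\<chi> d\<nu> = \<integral>D \<chi> d\<mu>\<close>, so it
  suffices to show that \<open>\<integral>f \<chi> d\<mu> \<longrightarrow> 0\<close> as the rank of \<open>\<chi>\<close> grows, for every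
  \<open>f \<in> L\<^sup>1(\<mu>)\<close>. Since \<open>|\<chi>| = 1\<close>, this property is linear and closed under \<open>L\<^sup>1\<close>-limits;
  by Dynkin's \<open>\<pi>\<close>-\<open>\<lambda>\<close> theorem and the density of simple functions it suffices to prove
  it for indicators of cylinder sets \<open>C = {x. \<forall>j\<in>J. x j \<in> X j}\<close>.

  For a cylinder, \<open>\<integral>1\<^sub>C \<chi> d\<mu>\<close> only involves finitely many coordinates and is computed
  by the forward recursion of the Markov chain. At a site of the support of \<open>\<chi>\<close> outside
  \<open>J\<close>, the factor of \<open>1\<^sub>C \<chi>\<close> is a nontrivial character, whose values sum to zero; together
  with the transitions into and out of that site this shrinks the total mass
  \<open>\<Sum>\<^sub>c |v c|\<close> of the forward vector \<open>v\<close> by the factor \<open>1 - (|\<A>| \<delta>)\<^sup>2\<close>, where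
  \<open>\<delta> > 0\<close> is the smallest transition probability. Hence
  \<open>|\<integral>1\<^sub>C \<chi> d\<mu>| \<le> (1 - (|\<A>| \<delta>)\<^sup>2)\<^bsup>\<lfloor>(rank \<chi> - |J|) / 2\<rfloor>\<^esup>\<close>.
\<close>

section \<open>Fourier coefficients along characters of high rank\<close>

lemma space_shift_space: "space shift_space = UNIV"
  unfolding shift_space_def space_PiM by (auto simp: PiE_def extensional_def)

lemma measurable_coordinate:
  assumes "sets M = sets shift_space"
  shows "(\<lambda>x. x j) \<in> measurable M (count_space UNIV)"
  using measurable_component_singleton[of j UNIV "\<lambda>_. count_space UNIV"]
  by (simp add: measurable_cong_sets[OF assms[unfolded shift_space_def] refl])

lemma character_norm: "character ch \<Longrightarrow> cmod (ch a) = 1"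
  unfolding character_def by auto

lemma character_sum_eq_zero:
  fixes ch :: "'a::{finite,ab_group_add} \<Rightarrow> complex"
  assumes "character ch" "ch \<noteq> (\<lambda>_. 1)"
  shows "(\<Sum>b\<in>UNIV. ch b) = 0"
proof -
  obtain a where a: "ch a \<noteq> 1"
    using assms(2) by auto
  have "(\<Sum>b\<in>UNIV. ch b) = (\<Sum>b\<in>UNIV. ch (a + b))"
    by (rule sum.reindex_bij_witness[of _ "\<lambda>b. a + b" "\<lambda>b. b - a"]) auto
  also have "\<dots> = ch a * (\<Sum>b\<in>UNIV. ch b)"
    using assms(1) unfolding character_def by (simp add: sum_distrib_left)
  finally have "(1 - ch a) * (\<Sum>b\<in>UNIV. ch b) = 0"
    by (simp add: algebra_simps)
  then show ?thesis
    using a by simp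
qed

lemma measurable_seq_char:
  assumes "sets M = sets shift_space"
  shows "seq_char c \<in> borel_measurable M"
  unfolding seq_char_def[abs_def]
  by (intro borel_measurable_prod measurable_compose[OF measurable_coordinate[OF assms]]) simp

lemma norm_seq_char: "(\<And>n. character (c n)) \<Longrightarrow> cmod (seq_char c x) = 1"
  unfolding seq_char_def by (simp add: prod_norm[symmetric] character_norm)

lemma integrable_mult_seq_char:
  assumes "sets M = sets shift_space" "\<And>n. character (c n)" "integrable M f"
  shows "integrable M (\<lambda>x. f x * seq_char c x)"
proof (rule Bochner_Integration.integrable_bound[OF assms(3)])
  show "(\<lambda>x. f x * seq_char c x) \<in> borel_measurable M"
    using assms(1,3) by (intro borel_measurable_times borel_measurable_integrable measurable_seq_char)
  show "AE x in M. norm (f x * seq_char c x) \<le> norm (f x)"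
    using assms(2) by (simp add: norm_mult norm_seq_char)
qed

definition fourier_coeff ::
  "(int \<Rightarrow> 'a::ab_group_add) measure \<Rightarrow> ((int \<Rightarrow> 'a) \<Rightarrow> complex) \<Rightarrow> (int \<Rightarrow> 'a \<Rightarrow> complex) \<Rightarrow> complex"
  where "fourier_coeff M f c = (\<integral>x. f x * seq_char c x \<partial>M)"

definition at_high_rank :: "(int \<Rightarrow> 'a::ab_group_add \<Rightarrow> complex) filter" where
  "at_high_rank = inf (filtercomap char_rank at_top)
     (principal {c. (\<forall>n. character (c n)) \<and> finite (char_support c)})"

lemma eventually_at_high_rank:
  "eventually P at_high_rank \<longleftrightarrow>
     (\<exists>R. \<forall>c. (\<forall>n. character (c n)) \<and> finite (char_support c) \<and> char_rank c > R \<longrightarrow> P c)"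
  unfolding at_high_rank_def eventually_inf_principal eventually_filtercomap_at_top_linorder
proof safe
  fix N
  assume "\<forall>c. N \<le> char_rank c \<longrightarrow> c \<in> {c. (\<forall>n. character (c n)) \<and> finite (char_support c)} \<longrightarrow> P c"
  then show "\<exists>R. \<forall>c. (\<forall>n. character (c n)) \<and> finite (char_support c) \<and> R < char_rank c \<longrightarrow> P c"
    by (intro exI[of _ N]) auto
next
  fix R
  assume "\<forall>c. (\<forall>n. character (c n)) \<and> finite (char_support c) \<and> R < char_rank c \<longrightarrow> P c"
  then show "\<exists>N. \<forall>c. N \<le> char_rank c \<longrightarrow> c \<in> {c. (\<forall>n. character (c n)) \<and> finite (char_support c)} \<longrightarrow> P c"
    by (intro exI[of _ "Suc R"]) auto
qed

lemma eventually_character_at_high_rank: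
  "eventually (\<lambda>c. (\<forall>n. character (c n)) \<and> finite (char_support c)) at_high_rank"
  unfolding eventually_at_high_rank by blast

lemma filterlim_char_rank_at_high_rank: "filterlim char_rank at_top at_high_rank"
  unfolding at_high_rank_def by (rule filterlim_mono[OF filterlim_filtercomap order_refl inf_le1])

lemma harmonically_mixing_iff_fourier_coeff:
  "harmonically_mixing \<nu> \<longleftrightarrow> (fourier_coeff \<nu> (\<lambda>_. 1) \<longlongrightarrow> 0) at_high_rank"
  unfolding harmonically_mixing_def tendsto_iff eventually_at_high_rank fourier_coeff_def dist_0_norm
  by simp

lemma tendsto_power_at_high_rank:
  assumes "0 \<le> \<rho>" "\<rho> < (1::real)"
  shows "((\<lambda>c. \<rho> ^ ((char_rank c - k) div 2)) \<longlongrightarrow> 0) at_high_rank"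
proof -
  have power_lim: "(\<lambda>n. \<rho> ^ n) \<longlonglongrightarrow> 0"
    using assms by (intro LIMSEQ_power_zero) simp
  have "filterlim (\<lambda>n. (n - k) div 2) at_top sequentially"
    unfolding filterlim_at_top eventually_sequentially
  proof
    fix z
    show "\<exists>N. \<forall>n\<ge>N. z \<le> (n - k) div 2"
      by (intro exI[of _ "2 * z + k"]) auto
  qed
  then have "filterlim (\<lambda>c. (char_rank c - k) div 2) sequentially at_high_rank"
    by (rule filterlim_compose[OF _ filterlim_char_rank_at_high_rank])
  then show ?thesis
    by (rule filterlim_compose[OF power_lim])
qed

lemma fourier_coeff_add:
  assumes "sets M = sets shift_space" "\<And>n. character (c n)" "integrable M f" "integrable M g"
  shows "fourier_coeff M (\<lambda>x. f x + g x) c = fourier_coeff M f c + fourier_coeff M g c"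
  unfolding fourier_coeff_def distrib_right
  using assms by (intro Bochner_Integration.integral_add integrable_mult_seq_char)

lemma norm_fourier_coeff_diff_le:
  assumes "sets M = sets shift_space" "\<And>n. character (c n)" "integrable M f" "integrable M g"
  shows "cmod (fourier_coeff M f c - fourier_coeff M g c) \<le> (\<integral>x. cmod (f x - g x) \<partial>M)"
proof -
  have "fourier_coeff M f c - fourier_coeff M g c = (\<integral>x. (f x - g x) * seq_char c x \<partial>M)"
    unfolding fourier_coeff_def left_diff_distrib
    using assms by (intro Bochner_Integration.integral_diff[symmetric] integrable_mult_seq_char)
  also have "cmod \<dots> \<le> (\<integral>x. cmod ((f x - g x) * seq_char c x) \<partial>M)"
    by (rule integral_norm_bound)
  also have "\<dots> = (\<integral>x. cmod (f x - g x) \<partial>M)"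
    using assms(2) by (simp add: norm_mult norm_seq_char)
  finally show ?thesis .
qed

lemma tendsto_fourier_coeff_cmult:
  "(fourier_coeff M f \<longlongrightarrow> 0) at_high_rank \<Longrightarrow> (fourier_coeff M (\<lambda>x. a * f x) \<longlongrightarrow> 0) at_high_rank"
  unfolding fourier_coeff_def by (simp add: mult.assoc tendsto_mult_right_zero)

lemma tendsto_fourier_coeff_add:
  assumes "sets M = sets shift_space" "integrable M f" "integrable M g"
    and "(fourier_coeff M f \<longlongrightarrow> 0) at_high_rank" "(fourier_coeff M g \<longlongrightarrow> 0) at_high_rank"
  shows "(fourier_coeff M (\<lambda>x. f x + g x) \<longlongrightarrow> 0) at_high_rank"
proof -
  have "((\<lambda>c. fourier_coeff M f c + fourier_coeff M g c) \<longlongrightarrow> 0) at_high_rank"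
    using tendsto_add[OF assms(4,5)] by simp
  moreover have "eventually (\<lambda>c. fourier_coeff M f c + fourier_coeff M g c
      = fourier_coeff M (\<lambda>x. f x + g x) c) at_high_rank"
    using eventually_character_at_high_rank
    by eventually_elim (simp add: fourier_coeff_add assms)
  ultimately show ?thesis
    by (rule Lim_transform_eventually)
qed

lemma tendsto_fourier_coeff_sum:
  assumes "sets M = sets shift_space" "\<And>i. i \<in> I \<Longrightarrow> integrable M (f i)"
    and "\<And>i. i \<in> I \<Longrightarrow> (fourier_coeff M (f i) \<longlongrightarrow> 0) at_high_rank"
  shows "(fourier_coeff M (\<lambda>x. \<Sum>i\<in>I. f i x) \<longlongrightarrow> 0) at_high_rank"
  using assms(2,3)
proof (induction I rule: infinite_finite_induct)
  case (insert i I)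
  then show ?case
    by (simp add: tendsto_fourier_coeff_add[OF assms(1)])
qed (simp_all add: fourier_coeff_def[abs_def])

lemma tendsto_fourier_coeff_L1_limit:
  assumes sets: "sets M = sets shift_space" and f: "integrable M f"
    and g: "\<And>i. integrable M (g i)" "\<And>i. (fourier_coeff M (g i) \<longlongrightarrow> 0) at_high_rank"
    and L1: "(\<lambda>i. \<integral>x. cmod (f x - g i x) \<partial>M) \<longlonglongrightarrow> 0"
  shows "(fourier_coeff M f \<longlongrightarrow> 0) at_high_rank"
  unfolding tendsto_iff
proof (intro allI impI)
  fix e :: real
  assume "e > 0"
  then obtain i where i: "(\<integral>x. cmod (f x - g i x) \<partial>M) < e / 2"
    using order_tendstoD(2)[OF L1, of "e / 2"] by (auto simp: eventually_sequentially)
  have "eventually (\<lambda>c. cmod (fourier_coeff M (g i) c) < e / 2) at_high_rank"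
    using tendsto_iff[THEN iffD1, OF g(2)[of i], rule_format, of "e / 2"] \<open>e > 0\<close> by simp
  with eventually_character_at_high_rank
  show "eventually (\<lambda>c. dist (fourier_coeff M f c) 0 < e) at_high_rank"
  proof eventually_elim
    case (elim c)
    have "cmod (fourier_coeff M f c)
        \<le> cmod (fourier_coeff M (g i) c) + cmod (fourier_coeff M f c - fourier_coeff M (g i) c)"
      by (rule norm_triangle_sub)
    also have "\<dots> \<le> cmod (fourier_coeff M (g i) c) + (\<integral>x. cmod (f x - g i x) \<partial>M)"
      using elim f g(1) by (simp add: norm_fourier_coeff_diff_le[OF sets])
    finally show ?case
      using elim i by (simp add: dist_norm)
  qed
qed

lemma tendsto_fourier_coeff_dominated_limit:
  assumes sets: "sets M = sets shift_space"
    and g: "\<And>i. g i \<in> borel_measurable M" "\<And>i. (fourier_coeff M (g i) \<longlongrightarrow> 0) at_high_rank"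
    and lim: "\<And>x. x \<in> space M \<Longrightarrow> (\<lambda>i. g i x) \<longlonglongrightarrow> f x"
    and bound: "\<And>i x. x \<in> space M \<Longrightarrow> cmod (g i x) \<le> w x" and w: "integrable M w"
  shows "(fourier_coeff M f \<longlongrightarrow> 0) at_high_rank"
proof -
  have f: "f \<in> borel_measurable M"
    using g(1) lim by (rule borel_measurable_LIMSEQ_metric)
  have f_bound: "cmod (f x) \<le> w x" if "x \<in> space M" for x
    using bound[OF that] by (intro tendsto_upperbound[OF tendsto_norm[OF lim[OF that]]]) auto
  have int_f: "integrable M f"
    by (rule Bochner_Integration.integrable_bound[OF w f])
      (auto intro!: AE_I2 order_trans[OF f_bound abs_ge_self])
  have int_g: "integrable M (g i)" for i
    by (rule Bochner_Integration.integrable_bound[OF w g(1)])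
      (auto intro!: AE_I2 order_trans[OF bound abs_ge_self])
  have diff_bound: "cmod (f x - g i x) \<le> 2 * w x" if "x \<in> space M" for x i
    using norm_triangle_ineq4[of "f x" "g i x"] f_bound[OF that] bound[OF that, of i] by simp
  have "(\<lambda>i. \<integral>x. cmod (f x - g i x) \<partial>M) \<longlonglongrightarrow> (\<integral>x. 0 \<partial>M)"
  proof (rule integral_dominated_convergence[where w = "\<lambda>x. 2 * w x"])
    show "AE x in M. (\<lambda>i. cmod (f x - g i x)) \<longlonglongrightarrow> 0"
    proof (rule AE_I2)
      fix x
      assume "x \<in> space M"
      then have "(\<lambda>i. f x - g i x) \<longlonglongrightarrow> f x - f x"
        by (intro tendsto_diff tendsto_const lim)
      then show "(\<lambda>i. cmod (f x - g i x)) \<longlonglongrightarrow> 0"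
        by (simp add: tendsto_norm_zero)
    qed
  qed (use f g(1) w diff_bound in auto)
  then show ?thesis
    using tendsto_fourier_coeff_L1_limit[OF sets int_f int_g g(2)] by simp
qed

section \<open>Forward recursion of a stationary Markov measure\<close>

lemma sum_PiE_insert:
  assumes "x \<notin> S"
  shows "(\<Sum>w\<in>PiE (insert x S) B. F w) = (\<Sum>y\<in>B x. \<Sum>w\<in>PiE S B. F (w(x := y)))"
proof -
  have "(\<Sum>w\<in>PiE (insert x S) B. F w) = (\<Sum>(y, w)\<in>B x \<times> PiE S B. F (w(x := y)))"
    using assms
    by (intro sum.reindex_bij_witness[of _ "\<lambda>(y, w). w(x := y)" "\<lambda>w. (w x, w(x := undefined))"])
       (auto simp: PiE_def extensional_def)
  then show ?thesis
    by (simp add: sum.cartesian_product)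
qed

lemma integral_finite_valued:
  fixes F :: "'b \<Rightarrow> 'c::{banach, second_countable_topology}"
  assumes "finite_measure M" "finite W" "\<And>x. x \<in> space M \<Longrightarrow> \<pi> x \<in> W"
    and "\<And>w. w \<in> W \<Longrightarrow> \<pi> -` {w} \<inter> space M \<in> sets M"
  shows "(\<integral>x. F (\<pi> x) \<partial>M) = (\<Sum>w\<in>W. measure M (\<pi> -` {w} \<inter> space M) *\<^sub>R F w)"
proof -
  interpret finite_measure M by fact
  have "(\<integral>x. F (\<pi> x) \<partial>M) = (\<integral>x. (\<Sum>w\<in>W. indicator (\<pi> -` {w} \<inter> space M) x *\<^sub>R F w) \<partial>M)"
  proof (rule Bochner_Integration.integral_cong)
    fix x
    assume "x \<in> space M"
    then have "(\<Sum>w\<in>W. indicator (\<pi> -` {w} \<inter> space M) x *\<^sub>R F w) = (\<Sum>w\<in>W. if w = \<pi> x then F w else 0)"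
      by (intro sum.cong) (auto simp: indicator_def)
    then show "F (\<pi> x) = (\<Sum>w\<in>W. indicator (\<pi> -` {w} \<inter> space M) x *\<^sub>R F w)"
      using assms(2,3) \<open>x \<in> space M\<close> by (simp add: sum.delta')
  qed simp
  also have "\<dots> = (\<Sum>w\<in>W. measure M (\<pi> -` {w} \<inter> space M) *\<^sub>R F w)"
    using assms(4)
    by (subst Bochner_Integration.integral_sum)
       (auto intro!: sum.cong integrable_scaleR_left integrable_real_indicator simp: less_top[symmetric])
  finally show ?thesis .
qed

fun markov_forward ::
  "('a::finite \<Rightarrow> real) \<Rightarrow> ('a \<Rightarrow> 'a \<Rightarrow> real) \<Rightarrow> (nat \<Rightarrow> 'a \<Rightarrow> complex) \<Rightarrow> nat \<Rightarrow> 'a \<Rightarrow> complex"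
  where
    "markov_forward p P d 0 c = of_real (p c) * d 0 c"
  | "markov_forward p P d (Suc T) c =
       d (Suc T) c * (\<Sum>b\<in>UNIV. markov_forward p P d T b * of_real (P b c))"

lemma sum_paths_markov_forward:
  fixes d :: "nat \<Rightarrow> 'a::finite \<Rightarrow> complex"
  shows "(\<Sum>w\<in>PiE {..T} (\<lambda>_. UNIV). of_real (p (w 0) * (\<Prod>i<T. P (w i) (w (Suc i))))
            * (\<Prod>i\<le>T. d i (w i)) * g (w T))
       = (\<Sum>c\<in>UNIV. markov_forward p P d T c * g c)"
proof (induction T arbitrary: g)
  case 0
  have "{..0::nat} = insert 0 {}"
    by auto
  then show ?case
    by (simp add: sum_PiE_insert)
next
  case (Suc T)
  define F where "F w = of_real (p (w 0) * (\<Prod>i<T. P (w i) (w (Suc i)))) * (\<Prod>i\<le>T. d i (w i))"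
    for w :: "nat \<Rightarrow> 'a"
  have split_last: "(\<Sum>w\<in>PiE {..Suc T} (\<lambda>_. UNIV). G w)
      = (\<Sum>c\<in>UNIV. \<Sum>w\<in>PiE {..T} (\<lambda>_. UNIV). G (w(Suc T := c)))" for G :: "(nat \<Rightarrow> 'a) \<Rightarrow> complex"
    using sum_PiE_insert[of "Suc T" "{..T}"] by (simp add: atMost_Suc)
  have extend_path: "of_real (p ((w(Suc T := c)) 0)
          * (\<Prod>i<Suc T. P ((w(Suc T := c)) i) ((w(Suc T := c)) (Suc i))))
        * (\<Prod>i\<le>Suc T. d i ((w(Suc T := c)) i)) * g ((w(Suc T := c)) (Suc T))
      = d (Suc T) c * g c * (F w * of_real (P (w T) c))" for w c
  proof -
    have "(\<Prod>i<T. P ((w(Suc T := c)) i) ((w(Suc T := c)) (Suc i))) = (\<Prod>i<T. P (w i) (w (Suc i)))"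
      "(\<Prod>i\<le>T. d i ((w(Suc T := c)) i)) = (\<Prod>i\<le>T. d i (w i))"
      by (auto intro: prod.cong)
    then show ?thesis
      by (simp add: F_def prod.lessThan_Suc)
  qed
  have "(\<Sum>w\<in>PiE {..Suc T} (\<lambda>_. UNIV). of_real (p (w 0) * (\<Prod>i<Suc T. P (w i) (w (Suc i))))
            * (\<Prod>i\<le>Suc T. d i (w i)) * g (w (Suc T)))
      = (\<Sum>c\<in>UNIV. \<Sum>w\<in>PiE {..T} (\<lambda>_. UNIV). d (Suc T) c * g c * (F w * of_real (P (w T) c)))"
    unfolding split_last extend_path ..
  also have "\<dots> = (\<Sum>c\<in>UNIV. d (Suc T) c * g c
      * (\<Sum>w\<in>PiE {..T} (\<lambda>_. UNIV). F w * of_real (P (w T) c)))"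
    by (simp add: sum_distrib_left)
  also have "\<dots> = (\<Sum>c\<in>UNIV. d (Suc T) c * g c
      * (\<Sum>b\<in>UNIV. markov_forward p P d T b * of_real (P b c)))"
    using Suc.IH[of "\<lambda>b. of_real (P b c)" for c] by (simp add: F_def)
  also have "\<dots> = (\<Sum>c\<in>UNIV. markov_forward p P d (Suc T) c * g c)"
    by (simp add: algebra_simps)
  finally show ?case .
qed

lemma integral_markov_window:
  fixes \<mu> :: "(int \<Rightarrow> 'a::finite) measure"
  assumes "stationary_markov \<mu> p P"
  shows "(\<integral>x. (\<Prod>i\<le>T. d i (x (L + int i))) \<partial>\<mu>) = (\<Sum>c\<in>UNIV. markov_forward p P d T c)"
proof -
  have sets: "sets \<mu> = sets shift_space" and "prob_space \<mu>"
    and cylinder: "\<And>w. measure \<mu> {x \<in> space \<mu>. \<forall>i\<le>T. x (L + int i) = w i}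
                        = p (w 0) * (\<Prod>i<T. P (w i) (w (Suc i)))"
    using assms unfolding stationary_markov_def by auto
  interpret prob_space \<mu> by fact
  have space: "space \<mu> = UNIV"
    using sets_eq_imp_space_eq[OF sets] by (simp add: space_shift_space)
  define W where "W = PiE {..T} (\<lambda>_. UNIV :: 'a set)"
  define \<pi> where "\<pi> x = restrict (\<lambda>i. x (L + int i)) {..T}" for x :: "int \<Rightarrow> 'a"
  have W: "finite W" "\<And>x. \<pi> x \<in> W"
    by (simp_all add: W_def \<pi>_def finite_PiE)
  have fiber: "\<pi> -` {w} \<inter> space \<mu> = {x \<in> space \<mu>. \<forall>i\<le>T. x (L + int i) = w i}" if "w \<in> W" for w
    using that by (auto simp: \<pi>_def W_def PiE_def extensional_def fun_eq_iff restrict_def)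
  have fiber_sets: "\<pi> -` {w} \<inter> space \<mu> \<in> sets \<mu>" if "w \<in> W" for w
  proof -
    have "\<pi> -` {w} \<inter> space \<mu> = (\<Inter>i\<in>{..T}. (\<lambda>x. x (L + int i)) -` {w i} \<inter> space \<mu>)"
      unfolding fiber[OF that] using space by auto
    also have "\<dots> \<in> sets \<mu>"
      by (intro sets.finite_INT measurable_sets[OF measurable_coordinate[OF sets]]) auto
    finally show ?thesis .
  qed
  have "(\<integral>x. (\<Prod>i\<le>T. d i (x (L + int i))) \<partial>\<mu>) = (\<integral>x. (\<Prod>i\<le>T. d i (\<pi> x i)) \<partial>\<mu>)"
    by (simp add: \<pi>_def)
  also have "\<dots> = (\<Sum>w\<in>W. measure \<mu> (\<pi> -` {w} \<inter> space \<mu>) *\<^sub>R (\<Prod>i\<le>T. d i (w i)))"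
    by (rule integral_finite_valued[OF finite_measure W fiber_sets])
  also have "\<dots> = (\<Sum>w\<in>W. of_real (p (w 0) * (\<Prod>i<T. P (w i) (w (Suc i)))) * (\<Prod>i\<le>T. d i (w i)) * 1)"
    by (intro sum.cong refl) (simp add: fiber cylinder scaleR_conv_of_real)
  also have "\<dots> = (\<Sum>c\<in>UNIV. markov_forward p P d T c)"
    unfolding W_def sum_paths_markov_forward[where g = "\<lambda>_. 1"] by simp
  finally show ?thesis .
qed

lemma markov_contraction_rate_nonneg:
  fixes P :: "'a::finite \<Rightarrow> 'a \<Rightarrow> real"
  assumes "\<And>a b. \<delta> \<le> P a b" "0 \<le> \<delta>" "\<And>a. (\<Sum>b\<in>UNIV. P a b) = 1"
  shows "0 \<le> 1 - (real CARD('a) * \<delta>)^2"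
proof -
  have "real CARD('a) * \<delta> \<le> (\<Sum>b\<in>UNIV. P undefined b)"
    using sum_mono[of UNIV "\<lambda>_. \<delta>" "P undefined"] assms(1) by simp
  then have "(real CARD('a) * \<delta>)^2 \<le> 1"
    using assms(2,3) by (simp add: power_le_one)
  then show ?thesis
    by simp
qed

lemma norm_two_step_kernel_le:
  fixes P :: "'a::finite \<Rightarrow> 'a \<Rightarrow> real" and e :: "'a \<Rightarrow> complex"
  assumes lower: "\<And>a b. \<delta> \<le> P a b" "0 \<le> \<delta>" and rows: "\<And>a. (\<Sum>b\<in>UNIV. P a b) = 1"
    and e: "\<And>b. cmod (e b) \<le> 1" "(\<Sum>b\<in>UNIV. e b) = 0"
  shows "(\<Sum>c\<in>UNIV. cmod (\<Sum>b\<in>UNIV. of_real (P a b) * e b * of_real (P b c)))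
           \<le> 1 - (real CARD('a) * \<delta>)^2"
proof -
  have P_nonneg: "0 \<le> P a b" for a b
    using lower order_trans by blast
  have bound: "cmod (\<Sum>b\<in>UNIV. of_real (P a b) * e b * of_real (P b c))
      \<le> (\<Sum>b\<in>UNIV. (P a b - \<delta>) * P b c) + \<delta> * (\<Sum>b\<in>UNIV. P b c - \<delta>)" for c
  proof -
    \<comment> \<open>Since \<open>e\<close> sums to zero, \<open>\<delta>\<close> can be subtracted from both transition factors.\<close>
    have "(\<Sum>b\<in>UNIV. e b * of_real (P b c - \<delta>)) = (\<Sum>b\<in>UNIV. e b * of_real (P b c))"
      using e(2) by (simp add: algebra_simps sum_subtractf flip: sum_distrib_left)
    then have "(\<Sum>b\<in>UNIV. of_real (P a b) * e b * of_real (P b c))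
        = (\<Sum>b\<in>UNIV. of_real (P a b - \<delta>) * e b * of_real (P b c))
          + of_real \<delta> * (\<Sum>b\<in>UNIV. e b * of_real (P b c - \<delta>))"
      by (simp add: algebra_simps sum.distrib sum_subtractf sum_distrib_left)
    also have "cmod \<dots> \<le> (\<Sum>b\<in>UNIV. (P a b - \<delta>) * P b c) + \<delta> * (\<Sum>b\<in>UNIV. P b c - \<delta>)"
    proof (rule norm_triangle_le[OF add_mono])
      have "cmod (of_real (P a b - \<delta>) * e b * of_real (P b c)) = (P a b - \<delta>) * cmod (e b) * P b c" for b
        using lower P_nonneg by (simp add: norm_mult abs_of_nonneg del: of_real_diff)
      also have "\<dots> b \<le> (P a b - \<delta>) * P b c" for b
        using lower P_nonneg e(1) by (intro mult_right_mono mult_left_le) auto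
      finally show "cmod (\<Sum>b\<in>UNIV. of_real (P a b - \<delta>) * e b * of_real (P b c))
          \<le> (\<Sum>b\<in>UNIV. (P a b - \<delta>) * P b c)"
        by (intro sum_norm_le)
      have "cmod (e b * of_real (P b c - \<delta>)) \<le> P b c - \<delta>" for b
        using lower e(1) by (simp add: norm_mult abs_of_nonneg mult_left_le_one_le del: of_real_diff)
      then have "cmod (\<Sum>b\<in>UNIV. e b * of_real (P b c - \<delta>)) \<le> (\<Sum>b\<in>UNIV. P b c - \<delta>)"
        by (rule sum_norm_le)
      then show "cmod (of_real \<delta> * (\<Sum>b\<in>UNIV. e b * of_real (P b c - \<delta>)))
          \<le> \<delta> * (\<Sum>b\<in>UNIV. P b c - \<delta>)"
        using lower(2) by (simp add: norm_mult mult_left_mono del: of_real_diff)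
    qed
    finally show ?thesis .
  qed
  have "(\<Sum>c\<in>UNIV. cmod (\<Sum>b\<in>UNIV. of_real (P a b) * e b * of_real (P b c)))
      \<le> (\<Sum>c\<in>UNIV. (\<Sum>b\<in>UNIV. (P a b - \<delta>) * P b c) + \<delta> * (\<Sum>b\<in>UNIV. P b c - \<delta>))"
    by (intro sum_mono bound)
  also have "\<dots> = (\<Sum>b\<in>UNIV. (P a b - \<delta>) * (\<Sum>c\<in>UNIV. P b c))
                  + \<delta> * (\<Sum>b\<in>UNIV. (\<Sum>c\<in>UNIV. P b c) - real CARD('a) * \<delta>)"
  proof -
    have "(\<Sum>c\<in>UNIV. \<Sum>b\<in>UNIV. (P a b - \<delta>) * P b c) = (\<Sum>b\<in>UNIV. (P a b - \<delta>) * (\<Sum>c\<in>UNIV. P b c))"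
      by (subst sum.swap) (simp add: sum_distrib_left)
    moreover have "(\<Sum>c\<in>UNIV. \<Sum>b\<in>UNIV. P b c - \<delta>) = (\<Sum>b\<in>UNIV. (\<Sum>c\<in>UNIV. P b c) - real CARD('a) * \<delta>)"
      by (subst sum.swap) (simp add: sum_subtractf)
    ultimately show ?thesis
      by (simp add: sum.distrib flip: sum_distrib_left)
  qed
  also have "\<dots> = 1 - (real CARD('a) * \<delta>)^2"
    by (simp add: rows sum_subtractf algebra_simps power2_eq_square)
  finally show ?thesis .
qed

lemma norm_markov_forward_0_le:
  assumes "\<And>a. 0 \<le> p a" "(\<Sum>a\<in>UNIV. p a) = 1" "\<And>b. cmod (d 0 b) \<le> 1"
  shows "(\<Sum>c\<in>UNIV. cmod (markov_forward p P d 0 c)) \<le> 1"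
proof -
  have "(\<Sum>c\<in>UNIV. cmod (markov_forward p P d 0 c)) \<le> (\<Sum>c\<in>UNIV. p c)"
    using assms(1,3) by (intro sum_mono) (simp add: norm_mult mult_left_le)
  with assms(2) show ?thesis
    by simp
qed

lemma norm_markov_forward_Suc_le:
  assumes P: "\<And>a b. 0 \<le> P a b" "\<And>a. (\<Sum>b\<in>UNIV. P a b) = 1"
    and d: "\<And>b. cmod (d (Suc T) b) \<le> 1"
  shows "(\<Sum>c\<in>UNIV. cmod (markov_forward p P d (Suc T) c))
           \<le> (\<Sum>b\<in>UNIV. cmod (markov_forward p P d T b))"
proof -
  have "cmod (markov_forward p P d (Suc T) c)
      \<le> (\<Sum>b\<in>UNIV. cmod (markov_forward p P d T b) * P b c)" for c
  proof -
    have "cmod (markov_forward p P d (Suc T) c)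
        \<le> cmod (\<Sum>b\<in>UNIV. markov_forward p P d T b * of_real (P b c))"
      using d[of c] by (simp add: norm_mult mult_left_le_one_le)
    also have "\<dots> \<le> (\<Sum>b\<in>UNIV. cmod (markov_forward p P d T b) * P b c)"
      using P(1) by (intro sum_norm_le) (simp add: norm_mult)
    finally show ?thesis .
  qed
  then have "(\<Sum>c\<in>UNIV. cmod (markov_forward p P d (Suc T) c))
      \<le> (\<Sum>c\<in>UNIV. \<Sum>b\<in>UNIV. cmod (markov_forward p P d T b) * P b c)"
    by (rule sum_mono)
  also have "\<dots> = (\<Sum>b\<in>UNIV. cmod (markov_forward p P d T b) * (\<Sum>c\<in>UNIV. P b c))"
    by (subst sum.swap) (simp add: sum_distrib_left)
  finally show ?thesis
    by (simp add: P(2))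
qed

lemma norm_markov_forward_Suc_Suc_le:
  fixes P :: "'a::finite \<Rightarrow> 'a \<Rightarrow> real"
  assumes lower: "\<And>a b. \<delta> \<le> P a b" "0 \<le> \<delta>" and rows: "\<And>a. (\<Sum>b\<in>UNIV. P a b) = 1"
    and d: "\<And>b. cmod (d (Suc T) b) \<le> 1" "\<And>b. cmod (d (Suc (Suc T)) b) \<le> 1"
    and cancel: "(\<Sum>b\<in>UNIV. d (Suc T) b) = 0"
  shows "(\<Sum>c\<in>UNIV. cmod (markov_forward p P d (Suc (Suc T)) c))
           \<le> (1 - (real CARD('a) * \<delta>)^2) * (\<Sum>a\<in>UNIV. cmod (markov_forward p P d T a))"
proof -
  define K where "K a c = (\<Sum>b\<in>UNIV. of_real (P a b) * d (Suc T) b * of_real (P b c))" for a c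
  have forward_eq: "markov_forward p P d (Suc (Suc T)) c
      = d (Suc (Suc T)) c * (\<Sum>a\<in>UNIV. markov_forward p P d T a * K a c)" for c
  proof -
    have "(\<Sum>b\<in>UNIV. d (Suc T) b * (\<Sum>a\<in>UNIV. markov_forward p P d T a * of_real (P a b))
          * of_real (P b c))
        = (\<Sum>b\<in>UNIV. \<Sum>a\<in>UNIV. markov_forward p P d T a
          * (of_real (P a b) * d (Suc T) b * of_real (P b c)))"
      by (simp add: sum_distrib_left sum_distrib_right algebra_simps)
    also have "\<dots> = (\<Sum>a\<in>UNIV. markov_forward p P d T a * K a c)"
      unfolding K_def by (subst sum.swap) (simp add: sum_distrib_left)
    finally show ?thesis
      by simp
  qed
  have "cmod (markov_forward p P d (Suc (Suc T)) c)
      \<le> (\<Sum>a\<in>UNIV. cmod (markov_forward p P d T a) * cmod (K a c))" for c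
  proof -
    have "cmod (markov_forward p P d (Suc (Suc T)) c)
        \<le> cmod (\<Sum>a\<in>UNIV. markov_forward p P d T a * K a c)"
      unfolding forward_eq using d(2) by (simp add: norm_mult mult_left_le_one_le)
    also have "\<dots> \<le> (\<Sum>a\<in>UNIV. cmod (markov_forward p P d T a) * cmod (K a c))"
      by (intro sum_norm_le) (simp add: norm_mult)
    finally show ?thesis .
  qed
  then have "(\<Sum>c\<in>UNIV. cmod (markov_forward p P d (Suc (Suc T)) c))
      \<le> (\<Sum>c\<in>UNIV. \<Sum>a\<in>UNIV. cmod (markov_forward p P d T a) * cmod (K a c))"
    by (rule sum_mono)
  also have "\<dots> = (\<Sum>a\<in>UNIV. cmod (markov_forward p P d T a) * (\<Sum>c\<in>UNIV. cmod (K a c)))"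
    by (subst sum.swap) (simp add: sum_distrib_left)
  also have "\<dots> \<le> (\<Sum>a\<in>UNIV. cmod (markov_forward p P d T a) * (1 - (real CARD('a) * \<delta>)^2))"
    unfolding K_def using lower rows d(1) cancel
    by (intro sum_mono mult_left_mono norm_two_step_kernel_le) auto
  finally show ?thesis
    by (simp add: sum_distrib_right mult.commute)
qed

lemma norm_markov_forward_le_power:
  fixes P :: "'a::finite \<Rightarrow> 'a \<Rightarrow> real"
  assumes lower: "\<And>a b. \<delta> \<le> P a b" "0 \<le> \<delta>" and rows: "\<And>a. (\<Sum>b\<in>UNIV. P a b) = 1"
    and p: "\<And>a. 0 \<le> p a" "(\<Sum>a\<in>UNIV. p a) = 1" and d: "\<And>i b. cmod (d i b) \<le> 1"
  shows "(\<Sum>c\<in>UNIV. cmod (markov_forward p P d T c))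
           \<le> (1 - (real CARD('a) * \<delta>)^2) ^ (card {i. 0 < i \<and> i < T \<and> (\<Sum>b\<in>UNIV. d i b) = 0} div 2)"
proof -
  define \<rho> where "\<rho> = 1 - (real CARD('a) * \<delta>)^2"
  define N where "N T = (\<Sum>c\<in>UNIV. cmod (markov_forward p P d T c))" for T
  define k where "k T = card {i. 0 < i \<and> i < T \<and> (\<Sum>b\<in>UNIV. d i b) = 0}" for T
  have \<rho>: "0 \<le> \<rho>" "\<rho> \<le> 1"
    unfolding \<rho>_def using markov_contraction_rate_nonneg[OF lower rows] by simp_all
  have base: "N 0 \<le> 1"
    unfolding N_def by (rule norm_markov_forward_0_le) (use p d in auto)
  have P_nonneg: "0 \<le> P a b" for a b
    using lower order_trans by blast
  have step: "N (Suc T) \<le> N T" for T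
    unfolding N_def by (rule norm_markov_forward_Suc_le) (use P_nonneg rows d in auto)
  have two_steps: "N (Suc (Suc T)) \<le> \<rho> * N T" if "(\<Sum>b\<in>UNIV. d (Suc T) b) = 0" for T
    unfolding N_def \<rho>_def by (rule norm_markov_forward_Suc_Suc_le) (use lower rows d that in auto)
  have finite_zeros: "finite {i. 0 < i \<and> i < T \<and> (\<Sum>b\<in>UNIV. d i b) = 0}" for T
    by (rule finite_subset[of _ "{..<T}"]) auto
  have "N T \<le> \<rho> ^ (k T div 2)"
  proof (induction T rule: induct_nat_012)
    case 0
    then show ?case
      using base by (simp add: k_def)
  next
    case 1
    have "{i. 0 < i \<and> i < Suc 0 \<and> (\<Sum>b\<in>UNIV. d i b) = 0} = {}"
      by auto
    then have "k (Suc 0) = 0"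
      unfolding k_def by (simp only: card.empty)
    then show ?case
      using step[of 0] base by simp
  next
    case (ge2 n)
    show ?case
    proof (cases "(\<Sum>b\<in>UNIV. d (Suc n) b) = 0")
      case True
      have "k (Suc (Suc n)) \<le> card ({i. 0 < i \<and> i < n \<and> (\<Sum>b\<in>UNIV. d i b) = 0} \<union> {n, Suc n})"
        unfolding k_def by (intro card_mono) (auto simp: finite_zeros)
      also have "\<dots> \<le> k n + 2"
        unfolding k_def using card_Un_le[of _ "{n, Suc n}"] by simp
      finally have "k (Suc (Suc n)) div 2 \<le> Suc (k n div 2)"
        by linarith
      have "N (Suc (Suc n)) \<le> \<rho> * \<rho> ^ (k n div 2)"
        using two_steps[OF True] mult_left_mono[OF ge2.IH(1) \<rho>(1)] by linarith
      also have "\<dots> \<le> \<rho> ^ (k (Suc (Suc n)) div 2)"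
        using power_decreasing[OF \<open>k (Suc (Suc n)) div 2 \<le> Suc (k n div 2)\<close> \<rho>] by simp
      finally show ?thesis .
    next
      case False
      then have "{i. 0 < i \<and> i < Suc (Suc n) \<and> (\<Sum>b\<in>UNIV. d i b) = 0}
          = {i. 0 < i \<and> i < Suc n \<and> (\<Sum>b\<in>UNIV. d i b) = 0}"
        by (auto simp: less_Suc_eq)
      then have "k (Suc (Suc n)) = k (Suc n)"
        by (simp add: k_def)
      then show ?thesis
        using step[of "Suc n"] ge2.IH(2) by simp
    qed
  qed
  then show ?thesis
    by (simp add: N_def \<rho>_def k_def)
qed

section \<open>Cylinder sets\<close>

definition cylinder_char_factor ::
  "(int \<Rightarrow> 'a::ab_group_add \<Rightarrow> complex) \<Rightarrow> int set \<Rightarrow> (int \<Rightarrow> 'a set) \<Rightarrow> int \<Rightarrow> 'a \<Rightarrow> complex"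
  where "cylinder_char_factor c J X j a =
    (if j \<in> char_support c then c j a else 1) * (if j \<in> J then indicator (X j) a else 1)"

lemma ex_int_window:
  assumes "finite F"
  shows "\<exists>L T. \<forall>j\<in>F. L < j \<and> j < L + int T"
proof -
  define K where "K = Max ((\<lambda>j. nat \<bar>j\<bar>) ` F)"
  have bound: "\<bar>j\<bar> \<le> int K" if "j \<in> F" for j
  proof -
    have "nat \<bar>j\<bar> \<le> K"
      unfolding K_def using assms that by (intro Max_ge) auto
    then show ?thesis
      by linarith
  qed
  have "- int K - 1 < j \<and> j < - int K - 1 + int (2 * K + 2)" if "j \<in> F" for j
    using bound[OF that] by linarith
  then show ?thesis
    by blast
qed

lemma prod_window:
  fixes F :: "int \<Rightarrow> 'c::comm_monoid_mult"
  assumes "S \<subseteq> {L..L + int T}"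
  shows "(\<Prod>i\<le>T. if L + int i \<in> S then F (L + int i) else 1) = (\<Prod>j\<in>S. F j)"
proof -
  have "(\<lambda>i. L + int i) ` {..T} = {L..L + int T}"
    by (auto intro!: image_eqI[where x = "nat (j - L)" for j])
  then have "(\<Prod>i\<le>T. if L + int i \<in> S then F (L + int i) else 1)
      = (\<Prod>j\<in>{L..L + int T}. if j \<in> S then F j else 1)"
    using prod.reindex[of "\<lambda>i. L + int i" "{..T}" "\<lambda>j. if j \<in> S then F j else 1"]
    by (simp add: inj_on_def)
  also have "\<dots> = (\<Prod>j\<in>S. F j)"
    using assms by (simp add: prod.inter_restrict[symmetric] Int_absorb1)
  finally show ?thesis .
qed

lemma prod_indicator_cylinder:
  assumes "finite J"
  shows "(\<Prod>j\<in>J. indicator (X j) (x j) :: complex) = indicator {x. \<forall>j\<in>J. x j \<in> X j} x"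
proof (cases "\<forall>j\<in>J. x j \<in> X j")
  case False
  then obtain j where "j \<in> J" "x j \<notin> X j"
    by auto
  with assms False show ?thesis
    by (auto simp: indicator_def prod_zero_iff)
qed (simp add: indicator_def)

lemma indicator_mult_seq_char_eq_prod:
  assumes "finite J" "char_support c \<subseteq> {L..L + int T}" "J \<subseteq> {L..L + int T}"
  shows "indicator {x. \<forall>j\<in>J. x j \<in> X j} x * seq_char c x
           = (\<Prod>i\<le>T. cylinder_char_factor c J X (L + int i) (x (L + int i)))"
proof -
  have "(\<Prod>i\<le>T. cylinder_char_factor c J X (L + int i) (x (L + int i)))
      = (\<Prod>i\<le>T. if L + int i \<in> char_support c then c (L + int i) (x (L + int i)) else 1)
        * (\<Prod>i\<le>T. if L + int i \<in> J then indicator (X (L + int i)) (x (L + int i)) else 1)"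
    unfolding cylinder_char_factor_def by (rule prod.distrib)
  also have "\<dots> = seq_char c x * (\<Prod>j\<in>J. indicator (X j) (x j))"
    unfolding prod_window[OF assms(2), of "\<lambda>j. c j (x j)"]
      prod_window[OF assms(3), of "\<lambda>j. indicator (X j) (x j)"]
    by (simp add: seq_char_def)
  finally show ?thesis
    by (simp add: prod_indicator_cylinder[OF assms(1)])
qed

lemma norm_cylinder_char_factor_le:
  "(\<And>n. character (c n)) \<Longrightarrow> cmod (cylinder_char_factor c J X j a) \<le> 1"
  by (simp add: cylinder_char_factor_def norm_mult character_norm indicator_def)

lemma char_rank_le_card_cancelling_sites:
  fixes c :: "int \<Rightarrow> 'a::{finite,ab_group_add} \<Rightarrow> complex"
  assumes J: "finite J" and c: "\<And>n. character (c n)"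
    and inside: "\<And>j. j \<in> char_support c \<union> J \<Longrightarrow> L < j \<and> j < L + int T"
  shows "char_rank c - card J
           \<le> card {i. 0 < i \<and> i < T \<and> (\<Sum>b\<in>UNIV. cylinder_char_factor c J X (L + int i) b) = 0}"
    (is "_ \<le> card ?Z")
proof -
  have "char_support c - J \<subseteq> (\<lambda>i. L + int i) ` ?Z"
  proof
    fix j
    assume j: "j \<in> char_support c - J"
    define i where "i = nat (j - L)"
    have "j = L + int i" "0 < i" "i < T"
      using inside[of j] j by (auto simp: i_def)
    moreover have "(\<Sum>b\<in>UNIV. cylinder_char_factor c J X j b) = 0"
      using j c character_sum_eq_zero[of "c j"]
      by (simp add: cylinder_char_factor_def char_support_def)
    ultimately show "j \<in> (\<lambda>i. L + int i) ` ?Z"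
      by auto
  qed
  moreover have "finite ?Z"
    by (rule finite_subset[of _ "{..<T}"]) auto
  ultimately have "card (char_support c - J) \<le> card ((\<lambda>i. L + int i) ` ?Z)"
    by (intro card_mono finite_imageI)
  also have "\<dots> \<le> card ?Z"
    by (rule card_image_le[OF \<open>finite ?Z\<close>])
  finally have "card (char_support c - J) \<le> card ?Z" .
  then show ?thesis
    using diff_card_le_card_Diff[OF J, of "char_support c"] by (simp add: char_rank_def)
qed

lemma norm_fourier_coeff_cylinder_le:
  fixes \<mu> :: "(int \<Rightarrow> 'a::{finite,ab_group_add}) measure"
  assumes sm: "stationary_markov \<mu> p P" and lower: "\<And>a b. \<delta> \<le> P a b" "0 \<le> \<delta>"
    and J: "finite J" and c: "\<And>n. character (c n)" "finite (char_support c)"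
  shows "cmod (fourier_coeff \<mu> (indicator {x. \<forall>j\<in>J. x j \<in> X j}) c)
           \<le> (1 - (real CARD('a) * \<delta>)^2) ^ ((char_rank c - card J) div 2)"
proof -
  have rows: "\<And>a. (\<Sum>b\<in>UNIV. P a b) = 1" and p: "\<And>a. 0 \<le> p a" "(\<Sum>a\<in>UNIV. p a) = 1"
    using sm unfolding stationary_markov_def by auto
  \<comment> \<open>Strict inclusion, because the sites \<open>0\<close> and \<open>T\<close> of the window are not counted below.\<close>
  obtain L T where inside: "\<And>j. j \<in> char_support c \<union> J \<Longrightarrow> L < j \<and> j < L + int T"
    using ex_int_window[of "char_support c \<union> J"] J c(2) by auto
  define d where "d i = cylinder_char_factor c J X (L + int i)" for i
  have "j \<in> {L..L + int T}" if "j \<in> char_support c \<union> J" for j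
    using inside[OF that] by simp
  then have "char_support c \<subseteq> {L..L + int T}" "J \<subseteq> {L..L + int T}"
    by blast+
  then have "fourier_coeff \<mu> (indicator {x. \<forall>j\<in>J. x j \<in> X j}) c
      = (\<integral>x. (\<Prod>i\<le>T. d i (x (L + int i))) \<partial>\<mu>)"
    unfolding fourier_coeff_def d_def by (simp add: indicator_mult_seq_char_eq_prod[OF J])
  also have "\<dots> = (\<Sum>a\<in>UNIV. markov_forward p P d T a)"
    by (rule integral_markov_window[OF sm])
  finally have "cmod (fourier_coeff \<mu> (indicator {x. \<forall>j\<in>J. x j \<in> X j}) c)
      \<le> (\<Sum>a\<in>UNIV. cmod (markov_forward p P d T a))"
    by (simp add: norm_sum)
  also have "\<dots> \<le> (1 - (real CARD('a) * \<delta>)^2) ^ (card {i. 0 < i \<and> i < T \<and> (\<Sum>b\<in>UNIV. d i b) = 0} div 2)"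
    using norm_cylinder_char_factor_le[OF c(1)] unfolding d_def
    by (intro norm_markov_forward_le_power[OF lower rows p])
  also have "\<dots> \<le> (1 - (real CARD('a) * \<delta>)^2) ^ ((char_rank c - card J) div 2)"
    using char_rank_le_card_cancelling_sites[where X = X, OF J c(1) inside] markov_contraction_rate_nonneg[OF lower rows]
    by (intro power_decreasing div_le_mono) (auto simp: d_def)
  finally show ?thesis .
qed

lemma ex_uniform_positive_lower_bound:
  fixes P :: "'a::finite \<Rightarrow> 'b::finite \<Rightarrow> real"
  assumes "\<And>a b. 0 < P a b"
  shows "\<exists>\<delta>>0. \<forall>a b. \<delta> \<le> P a b"
proof (intro exI conjI allI)
  define \<delta> where "\<delta> = Min (range (case_prod P))"
  show "\<delta> \<le> P a b" for a b
    unfolding \<delta>_def by (rule Min_le) auto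
  have "\<delta> \<in> range (case_prod P)"
    unfolding \<delta>_def by (rule Min_in) auto
  with assms show "0 < \<delta>"
    by auto
qed

lemma tendsto_fourier_coeff_cylinder:
  fixes \<mu> :: "(int \<Rightarrow> 'a::{finite,ab_group_add}) measure"
  assumes sm: "stationary_markov \<mu> p P" and pos: "\<And>a b. 0 < P a b" and J: "finite J"
  shows "(fourier_coeff \<mu> (indicator {x. \<forall>j\<in>J. x j \<in> X j}) \<longlongrightarrow> 0) at_high_rank"
proof -
  have rows: "\<And>a. (\<Sum>b\<in>UNIV. P a b) = 1"
    using sm unfolding stationary_markov_def by auto
  obtain \<delta> where \<delta>: "0 < \<delta>" "\<And>a b. \<delta> \<le> P a b"
    using ex_uniform_positive_lower_bound[of P, OF pos] by blast
  define \<rho> where "\<rho> = 1 - (real CARD('a) * \<delta>)^2"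
  have "0 \<le> \<rho>"
    unfolding \<rho>_def by (rule markov_contraction_rate_nonneg[OF \<delta>(2) less_imp_le[OF \<delta>(1)] rows])
  moreover have "\<rho> < 1"
    unfolding \<rho>_def using \<delta>(1) by simp
  ultimately have "((\<lambda>c. \<rho> ^ ((char_rank c - card J) div 2)) \<longlongrightarrow> 0) at_high_rank"
    by (rule tendsto_power_at_high_rank)
  moreover have "eventually (\<lambda>c. cmod (fourier_coeff \<mu> (indicator {x. \<forall>j\<in>J. x j \<in> X j}) c)
      \<le> \<rho> ^ ((char_rank c - card J) div 2)) at_high_rank"
    using eventually_character_at_high_rank
  proof eventually_elim
    case (elim c)
    then show ?case
      unfolding \<rho>_def
      by (intro norm_fourier_coeff_cylinder_le[OF sm \<delta>(2) less_imp_le[OF \<delta>(1)] J]) auto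
  qed
  ultimately show ?thesis
    by (rule Lim_null_comparison[rotated])
qed

section \<open>Extension to integrable densities\<close>

lemma integrable_complex_indicator:
  "finite_measure M \<Longrightarrow> A \<in> sets M \<Longrightarrow> integrable M (\<lambda>x. indicator A x :: complex)"
  using integrable_of_real[OF integrable_real_indicator[of A M]]
  by (simp add: of_real_indicator finite_measure.emeasure_finite less_top[symmetric])

lemma tendsto_fourier_coeff_indicator_disjoint_UN:
  fixes B :: "nat \<Rightarrow> (int \<Rightarrow> 'a::ab_group_add) set"
  assumes sets: "sets M = sets shift_space" and "finite_measure M"
    and B: "disjoint_family B" "\<And>i. B i \<in> sets M"
    and lim: "\<And>i. (fourier_coeff M (indicator (B i)) \<longlongrightarrow> 0) at_high_rank"
  shows "(fourier_coeff M (indicator (\<Union>i. B i)) \<longlongrightarrow> 0) at_high_rank"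
proof (rule tendsto_fourier_coeff_dominated_limit[OF sets, where w = "\<lambda>_. 1"])
  have "(\<lambda>x. \<Sum>i<n. indicator (B i) x) = (indicator (\<Union>i<n. B i) :: _ \<Rightarrow> complex)" for n
    using disjoint_family_on_mono[OF subset_UNIV B(1)]
    by (intro ext indicator_UN_disjoint[symmetric]) auto
  then show "(fourier_coeff M (indicator (\<Union>i<n. B i)) \<longlongrightarrow> 0) at_high_rank" for n
    using tendsto_fourier_coeff_sum[OF sets, of "{..<n}" "\<lambda>i. indicator (B i)"]
      integrable_complex_indicator[OF \<open>finite_measure M\<close> B(2)] lim
    by simp
  show "(\<lambda>n. indicator (\<Union>i<n. B i) x :: complex) \<longlonglongrightarrow> indicator (\<Union>i. B i) x" for x
    by (rule LIMSEQ_indicator_UN)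
  show "integrable M (\<lambda>_. 1 :: real)"
    using \<open>finite_measure M\<close> by (rule finite_measure.integrable_const)
qed (use B(2) in \<open>auto simp: indicator_def\<close>)

lemma tendsto_fourier_coeff_indicator_compl:
  assumes sets: "sets M = sets shift_space" and "finite_measure M" and B: "B \<in> sets M"
    and lim: "(fourier_coeff M (\<lambda>_. 1) \<longlongrightarrow> 0) at_high_rank" "(fourier_coeff M (indicator B) \<longlongrightarrow> 0) at_high_rank"
  shows "(fourier_coeff M (indicator (UNIV - B)) \<longlongrightarrow> 0) at_high_rank"
proof -
  have "(fourier_coeff M (\<lambda>x. - indicator B x) \<longlongrightarrow> 0) at_high_rank"
    using tendsto_fourier_coeff_cmult[OF lim(2), of "-1"] by simp
  then have "(fourier_coeff M (\<lambda>x. 1 + - indicator B x) \<longlongrightarrow> 0) at_high_rank"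
    using integrable_complex_indicator[OF \<open>finite_measure M\<close> B] lim(1)
      finite_measure.integrable_const[OF \<open>finite_measure M\<close>]
    by (intro tendsto_fourier_coeff_add[OF sets]) auto
  moreover have "(\<lambda>x. 1 + - indicator B x) = (indicator (UNIV - B) :: _ \<Rightarrow> complex)"
    by (auto simp: indicator_def)
  ultimately show ?thesis
    by simp
qed

lemma tendsto_fourier_coeff_indicator:
  fixes \<mu> :: "(int \<Rightarrow> 'a::{finite,ab_group_add}) measure"
  assumes sm: "stationary_markov \<mu> p P" and pos: "\<And>a b. 0 < P a b" and A: "A \<in> sets \<mu>"
  shows "(fourier_coeff \<mu> (indicator A) \<longlongrightarrow> 0) at_high_rank"
proof -
  have sets: "sets \<mu> = sets shift_space" and "prob_space \<mu>"
    using sm unfolding stationary_markov_def by auto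
  then have "finite_measure \<mu>"
    by (simp add: prob_space.finite_measure)
  have space: "(\<Pi>\<^sub>E i\<in>UNIV. space (count_space UNIV)) = (UNIV :: (int \<Rightarrow> 'a) set)"
    by (auto simp: PiE_def extensional_def)
  have generated: "sets \<mu> = sigma_sets (\<Pi>\<^sub>E i\<in>UNIV. space (count_space UNIV))
      (prod_algebra UNIV (\<lambda>_::int. count_space (UNIV :: 'a set)))"
    using sets unfolding shift_space_def sets_PiM by simp
  have cylinder: "(fourier_coeff \<mu> (indicator {x. \<forall>j\<in>J. x j \<in> X j}) \<longlongrightarrow> 0) at_high_rank"
    if "finite J" for J X
    using tendsto_fourier_coeff_cylinder[OF sm pos that] .
  from A[unfolded generated] show ?thesis
  proof (induction rule: sigma_sets_induct_disjoint[OF Int_stable_prod_algebra prod_algebra_sets_into_space,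
      consumes 1, case_names basic empty compl union])
    case (basic B)
    then obtain J E where "finite J" and B: "B = prod_emb UNIV (\<lambda>_. count_space UNIV) J (\<Pi>\<^sub>E j\<in>J. E j)"
      by (auto elim!: prod_algebraE)
    have "B = {x. \<forall>j\<in>J. x j \<in> E j}"
      unfolding B prod_emb_def by (auto simp: PiE_def Pi_def)
    then show ?case
      using cylinder[OF \<open>finite J\<close>] by simp
  next
    case empty
    then show ?case
      by (simp add: fourier_coeff_def[abs_def])
  next
    case (compl B)
    have "(fourier_coeff \<mu> (\<lambda>x. 1) \<longlongrightarrow> 0) at_high_rank"
      using cylinder[of "{}"] by simp
    then show ?case
      unfolding space using compl generated
      by (intro tendsto_fourier_coeff_indicator_compl[OF sets \<open>finite_measure \<mu>\<close>]) auto
  next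
    case (union B)
    then show ?case
      using generated by (intro tendsto_fourier_coeff_indicator_disjoint_UN[OF sets \<open>finite_measure \<mu>\<close>]) auto
  qed
qed

lemma tendsto_fourier_coeff_integrable:
  fixes \<mu> :: "(int \<Rightarrow> 'a::{finite,ab_group_add}) measure" and f :: "(int \<Rightarrow> 'a) \<Rightarrow> complex"
  assumes sm: "stationary_markov \<mu> p P" and pos: "\<And>a b. 0 < P a b" and f: "integrable \<mu> f"
  shows "(fourier_coeff \<mu> f \<longlongrightarrow> 0) at_high_rank"
proof -
  have sets: "sets \<mu> = sets shift_space"
    using sm unfolding stationary_markov_def by simp
  from f show ?thesis
  proof (induction rule: integrable_induct)
    case (base A c)
    have "(\<lambda>x. c * indicator A x) = (\<lambda>x. indicator A x *\<^sub>R c)"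
      by (auto simp: indicator_def)
    then show ?case
      using tendsto_fourier_coeff_cmult[OF tendsto_fourier_coeff_indicator[OF sm pos base(1)], of c]
      by simp
  next
    case (add f g)
    then show ?case
      by (rule tendsto_fourier_coeff_add[OF sets])
  next
    case (lim f s)
    show ?case
      by (rule tendsto_fourier_coeff_dominated_limit[OF sets, where g = s and w = "\<lambda>x. 2 * cmod (f x)"])
        (use lim in \<open>auto intro: borel_measurable_integrable\<close>)
  qed
qed

lemma ex_integrable_density:
  assumes "prob_space \<mu>" "finite_measure \<nu>" "sets \<nu> = sets \<mu>" "absolutely_continuous \<mu> \<nu>"
  shows "\<exists>D. D \<in> borel_measurable \<mu> \<and> (\<forall>x. 0 \<le> D x) \<and> integrable \<mu> D \<and> \<nu> = density \<mu> D"
proof -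
  interpret sigma_finite_measure \<mu>
    using assms(1) by (rule prob_space_imp_sigma_finite)
  obtain D where D: "D \<in> borel_measurable \<mu>" "AE x in \<mu>. RN_deriv \<mu> \<nu> x = ennreal (D x)" "\<And>x. 0 \<le> D x"
    using real_RN_deriv[OF assms(2,4,3)] by metis
  have density: "\<nu> = density \<mu> D"
    using density_RN_deriv[OF assms(4,3)] density_cong[OF _ _ D(2)] D(1) by simp
  have "integrable (density \<mu> D) (\<lambda>_. 1 :: real)"
    using finite_measure.integrable_const[OF assms(2)] density by simp
  then have "integrable \<mu> D"
    using integrable_density[of "\<lambda>_. 1 :: real" \<mu> D] D(1,3) by simp
  with D(1,3) density show ?thesis
    by blast
qed

theorem mainTheorem7:
  fixes \<mu> \<nu> :: "(int \<Rightarrow> 'a::{ab_group_add, finite}) measure"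
    and p :: "'a \<Rightarrow> real" and P :: "'a \<Rightarrow> 'a \<Rightarrow> real"
  assumes "stationary_markov \<mu> p P"
    and "\<forall>a b. P a b \<noteq> 0"
    and "prob_space \<nu>"
    and "sets \<nu> = sets \<mu>"
    and "absolutely_continuous \<mu> \<nu>"
  shows "harmonically_mixing \<nu>"
proof -
  have sets: "sets \<mu> = sets shift_space" and "prob_space \<mu>" and pos: "\<And>a b. 0 < P a b"
    using assms(1,2) unfolding stationary_markov_def by (auto simp: less_le)
  obtain D where D: "D \<in> borel_measurable \<mu>" "\<forall>x. 0 \<le> D x" "integrable \<mu> D"
    and \<nu>: "\<nu> = density \<mu> D"
    using ex_integrable_density[OF \<open>prob_space \<mu>\<close> prob_space.finite_measure[OF assms(3)] assms(4,5)]
    by blast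
  have "fourier_coeff \<nu> (\<lambda>_. 1) = fourier_coeff \<mu> (\<lambda>x. of_real (D x))"
    unfolding \<nu> fourier_coeff_def
    using D(1,2) by (simp add: integral_density measurable_seq_char[OF sets] scaleR_conv_of_real)
  moreover have "(fourier_coeff \<mu> (\<lambda>x. of_real (D x)) \<longlongrightarrow> 0) at_high_rank"
    using D(3) by (intro tendsto_fourier_coeff_integrable[OF assms(1) pos]) auto
  ultimately show ?thesis
    by (simp add: harmonically_mixing_iff_fourier_coeff)
qed

end
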